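(* Let $p\in\mathbb N$ and let $P(p)$ be the set of partitions of $\{1,\ldots,p\}$. For $\pi\in P(p)$ and $x\in\mathbb C^n$ (indexed by $\mathbb Z/n\mathbb Z$) put $f_\pi(x)=\sum_{i\in\pi}x_{i_1}\cdots x_{i_p}$ and $g_\pi(x)=\sum_{i\vdash\pi}x_{i_1}\cdots x_{i_p}$, the sums being over multi-indices $i=(i_1,\ldots,i_p)\in(\mathbb Z/n\mathbb Z)^p$. Then the duality map $\Phi$ maps the set $$X_p=\{(x_{j-i})\in C^{circ}_n(\infty)\mid f_\pi(x),g_\pi(x)\in\mathbb R\ \text{for all }\pi\in P(p)\}$$ bijectively onto itself (here $x$ denotes the first row).
   Context: For a partition $\pi$ of $\{1,\ldots,p\}$ and a multi-index $i=(i_1,\ldots,i_p)$, write $i\in\pi$ if $a\sim_\pi b$ implies $i_a=i_b$, and write $i\vdash\pi$ if $\sum_{r\in\beta}i_r=0$ in $\mathbb Z/n\mathbb Z$ for every block $\beta$ of $\pi$. $C^{circ}_n(\infty)$ is the set of $n\times n$ circulant complex Hadamard matrices ($H_{ij}=x_{j-i}$, $|x_k|=1$, $H/\sqrt n$ unitary). $F=(w^{ij}/\sqrt n)_{i,j=0}^{n-1}$ with $w=e^{2\pi i/n}$, and $\Phi((x_{j-i})_{ij})=((Fx)_{j-i})_{ij}$, a bijection of $C^{circ}_n(\infty)$ onto itself. *)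

theory Defs
  imports Complex_Main "HOL-Library.Disjoint_Sets"
begin

text \<open>Indices of Z/nZ are represented by 0..<n; matrices by functions nat => nat => complex,
  set to 0 outside the index range {0..<n} x {0..<n} (so equality of matrices is exact).\<close>

definition circ_matrix :: "nat \<Rightarrow> (nat \<Rightarrow> complex) \<Rightarrow> (nat \<Rightarrow> nat \<Rightarrow> complex)" where
  "circ_matrix n x = (\<lambda>i j. if i < n \<and> j < n then x ((j + n - i) mod n) else 0)"

definition circ_hadamard :: "nat \<Rightarrow> (nat \<Rightarrow> nat \<Rightarrow> complex) set" where
  "circ_hadamard n = {H. \<exists>x. H = circ_matrix n x \<and> (\<forall>k<n. cmod (x k) = 1)
      \<and> (\<forall>i<n. \<forall>j<n. (\<Sum>k<n. (H i k / of_real (sqrt n)) * cnj (H j k / of_real (sqrt n)))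
            = (if i = j then 1 else 0))}"

definition fourier :: "nat \<Rightarrow> (nat \<Rightarrow> complex) \<Rightarrow> (nat \<Rightarrow> complex)" where
  "fourier n x = (\<lambda>k. (\<Sum>l<n. cis (2 * pi / n) ^ (k * l) * x l) / of_real (sqrt n))"

definition duality_map :: "nat \<Rightarrow> (nat \<Rightarrow> nat \<Rightarrow> complex) \<Rightarrow> (nat \<Rightarrow> nat \<Rightarrow> complex)" where
  "duality_map n H = circ_matrix n (fourier n (\<lambda>k. H 0 k))"

definition set_partitions :: "nat \<Rightarrow> nat set set set" where
  "set_partitions p = {\<pi>. partition_on {1..p} \<pi>}"

definition multi_indices :: "nat \<Rightarrow> nat \<Rightarrow> (nat \<Rightarrow> nat) set" where
  "multi_indices n p = PiE {1..p} (\<lambda>_. {0..<n})"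

definition idx_in :: "(nat \<Rightarrow> nat) \<Rightarrow> nat set set \<Rightarrow> bool" where
  "idx_in i \<pi> \<longleftrightarrow> (\<forall>\<beta>\<in>\<pi>. \<forall>a\<in>\<beta>. \<forall>b\<in>\<beta>. i a = i b)"

definition idx_vdash :: "nat \<Rightarrow> (nat \<Rightarrow> nat) \<Rightarrow> nat set set \<Rightarrow> bool" where
  "idx_vdash n i \<pi> \<longleftrightarrow> (\<forall>\<beta>\<in>\<pi>. (\<Sum>r\<in>\<beta>. i r) mod n = 0)"

definition f_pi :: "nat \<Rightarrow> nat \<Rightarrow> nat set set \<Rightarrow> (nat \<Rightarrow> complex) \<Rightarrow> complex" where
  "f_pi n p \<pi> x = (\<Sum>i\<in>{i\<in>multi_indices n p. idx_in i \<pi>}. \<Prod>r\<in>{1..p}. x (i r))"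

definition g_pi :: "nat \<Rightarrow> nat \<Rightarrow> nat set set \<Rightarrow> (nat \<Rightarrow> complex) \<Rightarrow> complex" where
  "g_pi n p \<pi> x = (\<Sum>i\<in>{i\<in>multi_indices n p. idx_vdash n i \<pi>}. \<Prod>r\<in>{1..p}. x (i r))"

definition X_set :: "nat \<Rightarrow> nat \<Rightarrow> (nat \<Rightarrow> nat \<Rightarrow> complex) set" where
  "X_set n p = {H \<in> circ_hadamard n. \<forall>\<pi>\<in>set_partitions p.
      f_pi n p \<pi> (\<lambda>k. H 0 k) \<in> \<real> \<and> g_pi n p \<pi> (\<lambda>k. H 0 k) \<in> \<real>}"

end

theory Submission
  imports Defs
begin

text \<open>On first rows, \<Phi> is the unitary discrete Fourier transform F. The power spectrum
  |Fx|^2 is the transform of the autocorrelation of x, so F exchanges unimodularity of x with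
  orthogonality of the rows of (x_{j-i}); hence \<Phi> preserves circulant Hadamard matrices.
  F^2 is the reflection x_k \<mapsto> x_{-k}, so \<Phi>^4 = id and \<Phi>^3 is the inverse of \<Phi>.
  Expanding f_\<pi>(Fx) and summing over the multi-indices i \<in> \<pi> block by block, orthogonality of
  the characters of \<int>/n\<int> leaves exactly the multi-indices L \<turnstile> \<pi>, so f_\<pi>(Fx) is a nonzero real
  multiple of g_\<pi>(x). Applied to Fx, and since f_\<pi> is invariant under reflection, this makes
  g_\<pi>(Fx) a real multiple of f_\<pi>(x).\<close>

definition root_unity :: "nat \<Rightarrow> int \<Rightarrow> complex" where
  "root_unity n t = cis (2 * pi * of_int t / real n)"

lemma root_unity_0 [simp]: "root_unity n 0 = 1"
  by (simp add: root_unity_def)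

lemma root_unity_add: "root_unity n (a + b) = root_unity n a * root_unity n b"
  by (simp add: root_unity_def cis_mult add_divide_distrib distrib_left)

lemma cnj_root_unity: "cnj (root_unity n a) = root_unity n (- a)"
  by (simp add: root_unity_def cis_cnj)

lemma root_unity_power: "root_unity n a ^ m = root_unity n (int m * a)"
  by (simp add: root_unity_def DeMoivre mult_ac)

lemma cis_power_eq_root_unity: "cis (2 * pi / real n) ^ m = root_unity n (int m)"
  by (simp add: root_unity_def DeMoivre mult_ac)

lemma prod_root_unity: "finite S \<Longrightarrow> (\<Prod>r\<in>S. root_unity n (f r)) = root_unity n (\<Sum>r\<in>S. f r)"
  by (induction S rule: finite_induct) (simp_all add: root_unity_add)

lemma root_unity_multiple: "n \<ge> 1 \<Longrightarrow> root_unity n (int n * c) = 1"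
proof -
  assume "n \<ge> 1"
  then have "2 * pi * of_int (int n * c) / real n = 2 * pi * real_of_int c"
    by simp
  then show ?thesis
    unfolding root_unity_def by (simp add: cis_multiple_2pi)
qed

lemma root_unity_cong:
  assumes "n \<ge> 1" "a mod int n = b mod int n"
  shows "root_unity n a = root_unity n b"
proof -
  obtain c where "a = b + int n * c"
    using assms(2) by (metis mod_eq_dvd_iff dvdE diff_add_cancel add.commute)
  then show ?thesis
    using root_unity_multiple[OF assms(1)] by (simp add: root_unity_add)
qed

lemma root_unity_mod_mult: "n \<ge> 1 \<Longrightarrow> root_unity n ((a mod int n) * b) = root_unity n (a * b)"
  by (rule root_unity_cong) (auto simp: mod_mult_left_eq)

lemma root_unity_mult_mod: "n \<ge> 1 \<Longrightarrow> root_unity n (b * (a mod int n)) = root_unity n (b * a)"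
  by (rule root_unity_cong) (auto simp: mod_mult_right_eq)

lemma root_unity_eq_1_imp_dvd:
  assumes n: "n \<ge> 1" and a: "root_unity n a = 1"
  shows "int n dvd a"
proof -
  have "0 \<le> a mod int n" "a mod int n < int n"
    using n by auto
  then obtain k where k: "k < n" "int k = a mod int n"
    by (metis nonneg_int_cases of_nat_less_iff)
  have "root_unity n (int k) = 1"
    using root_unity_cong[OF n, of "int k" a] k a by simp
  then have "cis (2 * pi * real k / real n) = cis (2 * pi * real 0 / real n)"
    by (simp add: root_unity_def)
  moreover have inj: "inj_on (\<lambda>k. cis (2 * pi * real k / real n)) {..<n}"
    using bij_betw_roots_unity[of n] n by (auto simp: bij_betw_def)
  ultimately have "k = 0"
    using inj_onD[OF inj] k(1) n by force
  then show ?thesis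
    using k(2) by (simp add: dvd_eq_mod_eq_0)
qed

lemma sum_root_unity:
  assumes n: "n \<ge> 1"
  shows "(\<Sum>j<n. root_unity n (int j * s)) = (if int n dvd s then of_nat n else 0)"
proof (cases "int n dvd s")
  case True
  then obtain c where "s = int n * c" by blast
  then have "root_unity n (int j * s) = 1" for j
    using root_unity_multiple[OF n, of "int j * c"] by (simp add: mult_ac)
  then show ?thesis
    using True by simp
next
  case False
  then have ne: "root_unity n s \<noteq> 1"
    using root_unity_eq_1_imp_dvd[OF n] by blast
  have "(\<Sum>j<n. root_unity n (int j * s)) = (\<Sum>j<n. root_unity n s ^ j)"
    by (simp add: root_unity_power)
  also have "\<dots> = (root_unity n s ^ n - 1) / (root_unity n s - 1)"
    by (rule geometric_sum[OF ne])
  also have "root_unity n s ^ n = 1"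
    using root_unity_multiple[OF n] by (simp add: root_unity_power)
  finally show ?thesis
    using False by simp
qed

lemma int_mod_shift: "i < n \<Longrightarrow> int ((k + n - i) mod n) = (int k - int i) mod int n"
proof -
  assume "i < n"
  then have "int (k + n - i) = (int k - int i) + int n" by linarith
  then show ?thesis by (simp add: of_nat_mod)
qed

lemma mod_reflect_reflect:
  fixes k n a :: nat
  assumes "k < n" "a < n"
  shows "(k + n - (k + n - a) mod n) mod n = a"
proof -
  have "int ((k + n - (k + n - a) mod n) mod n) = (int k - (int k - int a) mod int n) mod int n"
    using assms by (simp add: int_mod_shift)
  also have "\<dots> = int a"
    using assms by (simp add: mod_diff_right_eq)
  finally show ?thesis by linarith
qed

lemma sum_mod_reflect:
  fixes k n :: nat
  assumes "k < n"
  shows "(\<Sum>i<n. g ((k + n - i) mod n)) = (\<Sum>i<n. g i)"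
  by (rule sum.reindex_bij_witness[where i="\<lambda>i. (k + n - i) mod n" and j="\<lambda>i. (k + n - i) mod n"])
     (use assms mod_reflect_reflect in auto)

lemma int_dvd_add_iff_eq_neg_mod:
  fixes k l n :: nat
  assumes "k < n" "l < n"
  shows "int n dvd int k + int l \<longleftrightarrow> l = (n - k) mod n"
proof (cases "k = 0")
  case True
  then show ?thesis
    using assms by (auto simp: zdvd_not_zless)
next
  case False
  have "int n dvd int k + int l \<longleftrightarrow> n dvd k + l"
    by (metis of_nat_add of_nat_dvd_iff)
  also have "\<dots> \<longleftrightarrow> k + l = n"
  proof
    assume "n dvd k + l"
    then obtain c where c: "k + l = n * c" by blast
    with False have "0 < c"
      by (auto intro: ccontr)
    moreover have "n * c < n * 2"
      using c assms by linarith
    ultimately have "c = 1"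
      by auto
    with c show "k + l = n"
      by simp
  qed simp
  finally show ?thesis
    using False assms by auto
qed

lemma int_dvd_diff_iff_eq:
  fixes l l' n :: nat
  assumes "l < n" "l' < n"
  shows "int n dvd int l - int l' \<longleftrightarrow> l = l'"
proof -
  have "int n dvd int l - int l' \<longleftrightarrow> int l mod int n = int l' mod int n"
    by (simp add: mod_eq_dvd_iff)
  then show ?thesis
    using assms by simp
qed

abbreviation sqrt_n :: "nat \<Rightarrow> complex" where
  "sqrt_n n \<equiv> complex_of_real (sqrt (real n))"

lemma sqrt_n_mult_self: "sqrt_n n * sqrt_n n = of_nat n"
proof -
  have "sqrt (real n) * sqrt (real n) = real n"
    by simp
  then show ?thesis
    by (metis of_real_mult of_real_of_nat_eq)
qed

lemma fourier_root_unity: "fourier n x k = (\<Sum>l<n. root_unity n (int k * int l) * x l) / sqrt_n n"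
  unfolding fourier_def cis_power_eq_root_unity by simp

lemma fourier_cong: "(\<And>k. k < n \<Longrightarrow> x k = y k) \<Longrightarrow> fourier n x = fourier n y"
  unfolding fourier_def by (intro ext arg_cong2[where f="(/)"] sum.cong refl) auto

lemma fourier_fourier:
  assumes n: "n \<ge> 1" and k: "k < n"
  shows "fourier n (fourier n x) k = x ((n - k) mod n)"
proof -
  have "fourier n (fourier n x) k
      = (\<Sum>m<n. root_unity n (int k * int m) * ((\<Sum>l<n. root_unity n (int m * int l) * x l) / sqrt_n n)) / sqrt_n n"
    by (simp add: fourier_root_unity)
  also have "\<dots> = (\<Sum>m<n. \<Sum>l<n. x l * root_unity n (int m * (int k + int l))) / (sqrt_n n * sqrt_n n)"
    by (simp add: sum_distrib_left sum_divide_distrib root_unity_add[symmetric] algebra_simps)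
  also have "\<dots> = (\<Sum>l<n. x l * (\<Sum>m<n. root_unity n (int m * (int k + int l)))) / of_nat n"
    by (subst sum.swap) (simp add: sqrt_n_mult_self sum_distrib_left)
  also have "\<dots> = (\<Sum>l<n. if l = (n - k) mod n then x l * of_nat n else 0) / of_nat n"
    using n k by (intro arg_cong2[where f="(/)"] sum.cong refl)
      (auto simp: sum_root_unity int_dvd_add_iff_eq_neg_mod)
  also have "\<dots> = x ((n - k) mod n)"
    using n by (simp add: sum.delta')
  finally show ?thesis .
qed

definition unimodular :: "nat \<Rightarrow> (nat \<Rightarrow> complex) \<Rightarrow> bool" where
  "unimodular n x \<longleftrightarrow> (\<forall>k<n. cmod (x k) = 1)"

definition circ_row_inner :: "nat \<Rightarrow> (nat \<Rightarrow> complex) \<Rightarrow> nat \<Rightarrow> nat \<Rightarrow> complex" where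
  "circ_row_inner n x i j = (\<Sum>k<n. x ((k + n - i) mod n) * cnj (x ((k + n - j) mod n)))"

definition orthogonal_rows :: "nat \<Rightarrow> (nat \<Rightarrow> complex) \<Rightarrow> bool" where
  "orthogonal_rows n x \<longleftrightarrow>
     (\<forall>i<n. \<forall>j<n. circ_row_inner n x i j = (if i = j then of_nat n else 0))"

lemma circ_hadamard_iff:
  assumes n: "n \<ge> 1"
  shows "H \<in> circ_hadamard n \<longleftrightarrow> (\<exists>x. H = circ_matrix n x \<and> unimodular n x \<and> orthogonal_rows n x)"
proof -
  have normalized: "(\<Sum>k<n. (circ_matrix n x i k / sqrt_n n) * cnj (circ_matrix n x j k / sqrt_n n))
      = (if i = j then 1 else 0) \<longleftrightarrow> circ_row_inner n x i j = (if i = j then of_nat n else 0)"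
    if "i < n" "j < n" for x i j
  proof -
    have "(\<Sum>k<n. (circ_matrix n x i k / sqrt_n n) * cnj (circ_matrix n x j k / sqrt_n n))
        = circ_row_inner n x i j / of_nat n"
      using that by (simp add: circ_matrix_def circ_row_inner_def sum_divide_distrib sqrt_n_mult_self[symmetric])
    then show ?thesis
      using n by (auto simp: field_simps)
  qed
  then have "(\<forall>i<n. \<forall>j<n. (\<Sum>k<n. (circ_matrix n x i k / sqrt_n n) * cnj (circ_matrix n x j k / sqrt_n n))
      = (if i = j then 1 else 0)) \<longleftrightarrow> orthogonal_rows n x" for x
    unfolding orthogonal_rows_def by blast
  then show ?thesis
    unfolding circ_hadamard_def unimodular_def by blast
qed

lemma sum_rotate3: "(\<Sum>k\<in>A. \<Sum>l\<in>B. \<Sum>m\<in>C. f k l m) = (\<Sum>l\<in>B. \<Sum>m\<in>C. \<Sum>k\<in>A. f k l m)"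
  by (subst sum.swap) (rule sum.cong[OF refl], rule sum.swap)

lemma circ_row_inner_fourier:
  assumes n: "n \<ge> 1" and i: "i < n" and j: "j < n"
  shows "circ_row_inner n (fourier n x) i j = (\<Sum>l<n. root_unity n (int l * (int j - int i)) * (x l * cnj (x l)))"
proof -
  have row_i: "fourier n x ((k + n - i) mod n) = (\<Sum>l<n. root_unity n ((int k - int i) * int l) * x l) / sqrt_n n" for k
    using n i by (simp add: fourier_root_unity int_mod_shift root_unity_mod_mult)
  have row_j: "cnj (fourier n x ((k + n - j) mod n))
      = (\<Sum>l<n. root_unity n (- ((int k - int j) * int l)) * cnj (x l)) / sqrt_n n" for k
    using n j by (simp add: fourier_root_unity int_mod_shift root_unity_mod_mult cnj_root_unity)
  have "circ_row_inner n (fourier n x) i j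
     = (\<Sum>k<n. \<Sum>l<n. \<Sum>l'<n. (x l * cnj (x l') * root_unity n (int j * int l' - int i * int l))
          * root_unity n (int k * (int l - int l'))) / of_nat n"
    unfolding circ_row_inner_def row_i row_j
    by (simp add: sum_product sum_divide_distrib sqrt_n_mult_self[symmetric] root_unity_add[symmetric] algebra_simps)
  also have "\<dots> = (\<Sum>l<n. \<Sum>l'<n. (x l * cnj (x l') * root_unity n (int j * int l' - int i * int l))
          * (\<Sum>k<n. root_unity n (int k * (int l - int l')))) / of_nat n"
    by (subst sum_rotate3) (simp add: sum_distrib_left)
  also have "\<dots> = (\<Sum>l<n. \<Sum>l'<n. if l' = l
          then (x l * cnj (x l) * root_unity n (int j * int l - int i * int l)) * of_nat n else 0) / of_nat n"
    using n by (intro arg_cong2[where f="(/)"] sum.cong refl) (auto simp: sum_root_unity int_dvd_diff_iff_eq)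
  also have "\<dots> = (\<Sum>l<n. root_unity n (int l * (int j - int i)) * (x l * cnj (x l)))"
    using n by (simp add: sum_divide_distrib algebra_simps)
  finally show ?thesis .
qed

lemma orthogonal_rows_fourier:
  assumes n: "n \<ge> 1" and x: "unimodular n x"
  shows "orthogonal_rows n (fourier n x)"
  unfolding orthogonal_rows_def
proof (intro allI impI)
  fix i j assume i: "i < n" and j: "j < n"
  have "x l * cnj (x l) = 1" if "l < n" for l
    using x that unfolding unimodular_def by (simp add: complex_norm_square[symmetric])
  then have "circ_row_inner n (fourier n x) i j = (\<Sum>l<n. root_unity n (int l * (int j - int i)))"
    by (simp add: circ_row_inner_fourier[OF n i j])
  also have "\<dots> = (if i = j then of_nat n else 0)"
    using n i j by (simp add: sum_root_unity int_dvd_diff_iff_eq)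
  finally show "circ_row_inner n (fourier n x) i j = (if i = j then of_nat n else 0)" .
qed

text \<open>Wiener--Khinchin: the power spectrum is the Fourier transform of the autocorrelation.\<close>

lemma fourier_mult_cnj:
  assumes n: "n \<ge> 1" and m: "m < n"
  shows "fourier n x m * cnj (fourier n x m)
    = (\<Sum>i<n. root_unity n (- (int m * int i)) * circ_row_inner n x i 0) / of_nat n"
proof -
  define P where "P = (\<Sum>l<n. root_unity n (int m * int l) * x l)"
  have P_shift: "P = (\<Sum>i<n. root_unity n (int m * (int k - int i)) * x ((k + n - i) mod n))"
    if k: "k < n" for k
  proof -
    have "P = (\<Sum>i<n. root_unity n (int m * int ((k + n - i) mod n)) * x ((k + n - i) mod n))"
      unfolding P_def by (rule sum_mod_reflect[OF k, symmetric])
    also have "\<dots> = (\<Sum>i<n. root_unity n (int m * (int k - int i)) * x ((k + n - i) mod n))"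
      using n by (intro sum.cong refl) (simp add: int_mod_shift root_unity_mult_mod)
    finally show ?thesis .
  qed
  have "P * cnj P = (\<Sum>k<n. root_unity n (- (int m * int k)) * cnj (x k) * P)"
    by (simp add: P_def cnj_root_unity sum_distrib_left sum_distrib_right mult_ac)
  also have "\<dots> = (\<Sum>k<n. \<Sum>i<n. root_unity n (- (int m * int i))
      * (x ((k + n - i) mod n) * cnj (x ((k + n - 0) mod n))))"
    by (intro sum.cong refl) (simp add: P_shift sum_distrib_left root_unity_add[symmetric] algebra_simps)
  also have "\<dots> = (\<Sum>i<n. root_unity n (- (int m * int i)) * circ_row_inner n x i 0)"
    unfolding circ_row_inner_def by (subst sum.swap) (simp add: sum_distrib_left)
  finally show ?thesis
    by (simp add: fourier_root_unity P_def[symmetric] sqrt_n_mult_self[symmetric])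
qed

lemma unimodular_fourier:
  assumes n: "n \<ge> 1" and x: "orthogonal_rows n x"
  shows "unimodular n (fourier n x)"
  unfolding unimodular_def
proof (intro allI impI)
  fix m assume m: "m < n"
  have "circ_row_inner n x i 0 = (if i = 0 then of_nat n else 0)" if "i < n" for i
    using x n that unfolding orthogonal_rows_def by auto
  then have "(\<Sum>i<n. root_unity n (- (int m * int i)) * circ_row_inner n x i 0)
      = (\<Sum>i<n. if i = 0 then of_nat n else 0)"
    by (intro sum.cong) simp_all
  then have "fourier n x m * cnj (fourier n x m) = 1"
    using n by (simp add: fourier_mult_cnj[OF n m])
  then have "(cmod (fourier n x m))\<^sup>2 = 1"
    by (metis complex_norm_square of_real_1 of_real_eq_iff)
  then show "cmod (fourier n x m) = 1"
    by (metis norm_ge_zero power2_eq_1_iff le_minus_one_simps(3))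
qed

lemma circ_matrix_cong: "(\<And>k. k < n \<Longrightarrow> x k = y k) \<Longrightarrow> circ_matrix n x = circ_matrix n y"
  unfolding circ_matrix_def by (intro ext) auto

lemma circ_matrix_first_row: "k < n \<Longrightarrow> circ_matrix n x 0 k = x k"
  by (simp add: circ_matrix_def)

lemma duality_map_circ_matrix: "duality_map n (circ_matrix n x) = circ_matrix n (fourier n x)"
  unfolding duality_map_def
  by (intro arg_cong[where f="circ_matrix n"] fourier_cong) (simp add: circ_matrix_first_row)

lemma duality_map_circ_hadamard:
  assumes n: "n \<ge> 1" and H: "H \<in> circ_hadamard n"
  shows "duality_map n H \<in> circ_hadamard n"
proof -
  obtain x where "H = circ_matrix n x" "unimodular n x" "orthogonal_rows n x"
    using H circ_hadamard_iff[OF n] by blast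
  then show ?thesis
    using circ_hadamard_iff[OF n] unimodular_fourier[OF n] orthogonal_rows_fourier[OF n]
    by (auto simp: duality_map_circ_matrix)
qed

lemma duality_map_fourfold:
  assumes n: "n \<ge> 1" and H: "H \<in> circ_hadamard n"
  shows "duality_map n (duality_map n (duality_map n (duality_map n H))) = H"
proof -
  obtain x where x: "H = circ_matrix n x"
    using H circ_hadamard_iff[OF n] by blast
  have "fourier n (fourier n (fourier n (fourier n x))) k = x k" if k: "k < n" for k
  proof -
    have "fourier n (fourier n (fourier n (fourier n x))) k = fourier n (fourier n x) ((n - k) mod n)"
      by (rule fourier_fourier[OF n k])
    also have "\<dots> = x ((n - (n - k) mod n) mod n)"
      using n by (intro fourier_fourier) auto
    also have "(n - (n - k) mod n) mod n = k"
      using mod_reflect_reflect[of 0 n k] k by simp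
    finally show ?thesis .
  qed
  then show ?thesis
    unfolding x duality_map_circ_matrix by (intro circ_matrix_cong) auto
qed

definition block_of :: "'a set set \<Rightarrow> 'a \<Rightarrow> 'a set" where
  "block_of \<pi> r = (THE \<beta>. \<beta> \<in> \<pi> \<and> r \<in> \<beta>)"

lemma block_of_eq:
  assumes P: "partition_on U \<pi>" and "\<beta> \<in> \<pi>" "r \<in> \<beta>"
  shows "block_of \<pi> r = \<beta>"
  unfolding block_of_def
proof (rule the_equality)
  show "\<beta> \<in> \<pi> \<and> r \<in> \<beta>"
    using assms by blast
  show "\<gamma> = \<beta>" if "\<gamma> \<in> \<pi> \<and> r \<in> \<gamma>" for \<gamma>
    using partition_onD2[OF P] assms that disjointD by blast
qed

lemma block_of_in:
  assumes P: "partition_on U \<pi>" and r: "r \<in> U"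
  shows "block_of \<pi> r \<in> \<pi>" "r \<in> block_of \<pi> r"
proof -
  obtain \<beta> where "\<beta> \<in> \<pi>" "r \<in> \<beta>"
    using partition_onD1[OF P] r by blast
  then show "block_of \<pi> r \<in> \<pi>" "r \<in> block_of \<pi> r"
    using block_of_eq[OF P] by auto
qed

text \<open>A multi-index constant on the blocks of \<open>\<pi>\<close> is the same as a choice of one index per block.\<close>

lemma sum_idx_in_prod_eq_prod_blocks:
  fixes h :: "nat \<Rightarrow> nat \<Rightarrow> 'a::comm_semiring_1"
  assumes P: "partition_on {1..p} \<pi>"
  shows "(\<Sum>i\<in>{i\<in>multi_indices n p. idx_in i \<pi>}. \<Prod>r\<in>{1..p}. h r (i r))
       = (\<Prod>\<beta>\<in>\<pi>. \<Sum>c<n. \<Prod>r\<in>\<beta>. h r c)"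
proof -
  have U: "\<Union>\<pi> = {1..p}"
    using partition_onD1[OF P] by simp
  have nonempty: "\<And>\<beta>. \<beta> \<in> \<pi> \<Longrightarrow> (SOME r. r \<in> \<beta>) \<in> \<beta>"
    using partition_onD3[OF P] by (metis ex_in_conv someI_ex)
  have "(\<Prod>\<beta>\<in>\<pi>. \<Sum>c<n. \<Prod>r\<in>\<beta>. h r c) = (\<Sum>C\<in>PiE \<pi> (\<lambda>_. {..<n}). \<Prod>\<beta>\<in>\<pi>. \<Prod>r\<in>\<beta>. h r (C \<beta>))"
    using finite_elements[OF _ P] by (intro prod_sum_PiE) simp_all
  also have "\<dots> = (\<Sum>i\<in>{i\<in>multi_indices n p. idx_in i \<pi>}. \<Prod>r\<in>{1..p}. h r (i r))"
  proof (rule sum.reindex_bij_witness[where i="\<lambda>i. \<lambda>\<beta>\<in>\<pi>. i (SOME r. r \<in> \<beta>)"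
        and j="\<lambda>C. \<lambda>r\<in>{1..p}. C (block_of \<pi> r)"])
    fix C assume C: "C \<in> PiE \<pi> (\<lambda>_. {..<n})"
    show "(\<lambda>\<beta>\<in>\<pi>. (\<lambda>r\<in>{1..p}. C (block_of \<pi> r)) (SOME r. r \<in> \<beta>)) = C"
      using C U nonempty block_of_eq[OF P] by (fastforce simp: PiE_def extensional_def)
    show "(\<lambda>r\<in>{1..p}. C (block_of \<pi> r)) \<in> {i\<in>multi_indices n p. idx_in i \<pi>}"
      using C U block_of_in[OF P] block_of_eq[OF P]
      unfolding multi_indices_def idx_in_def by (fastforce simp: PiE_iff)
    have "(\<Prod>r\<in>{1..p}. h r ((\<lambda>r\<in>{1..p}. C (block_of \<pi> r)) r)) = (\<Prod>r\<in>{1..p}. h r (C (block_of \<pi> r)))"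
      by (intro prod.cong) auto
    also have "\<dots> = (\<Prod>\<beta>\<in>\<pi>. \<Prod>r\<in>\<beta>. h r (C (block_of \<pi> r)))"
      by (rule prod.partition[OF _ P]) simp
    also have "\<dots> = (\<Prod>\<beta>\<in>\<pi>. \<Prod>r\<in>\<beta>. h r (C \<beta>))"
      using block_of_eq[OF P] by (intro prod.cong refl) auto
    finally show "(\<Prod>r\<in>{1..p}. h r ((\<lambda>r\<in>{1..p}. C (block_of \<pi> r)) r)) = (\<Prod>\<beta>\<in>\<pi>. \<Prod>r\<in>\<beta>. h r (C \<beta>))" .
  next
    fix i assume "i \<in> {i\<in>multi_indices n p. idx_in i \<pi>}"
    then have i: "i \<in> PiE {1..p} (\<lambda>_. {0..<n})" "idx_in i \<pi>"
      unfolding multi_indices_def by auto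
    show "(\<lambda>r\<in>{1..p}. (\<lambda>\<beta>\<in>\<pi>. i (SOME r. r \<in> \<beta>)) (block_of \<pi> r)) = i"
    proof
      fix r
      show "(\<lambda>r\<in>{1..p}. (\<lambda>\<beta>\<in>\<pi>. i (SOME r. r \<in> \<beta>)) (block_of \<pi> r)) r = i r"
        using i block_of_in[OF P, of r] nonempty[of "block_of \<pi> r"]
        unfolding idx_in_def by (auto simp: PiE_def extensional_def)
    qed
    show "(\<lambda>\<beta>\<in>\<pi>. i (SOME r. r \<in> \<beta>)) \<in> PiE \<pi> (\<lambda>_. {..<n})"
      using i(1) U nonempty by (fastforce simp: PiE_iff)
  qed
  finally show ?thesis ..
qed

lemma prod_if_const:
  "finite S \<Longrightarrow> (\<Prod>b\<in>S. if P b then (a::'a::comm_semiring_1) else 0)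
     = (if (\<forall>b\<in>S. P b) then a ^ card S else 0)"
  by (induction S rule: finite_induct) auto

text \<open>Orthogonality of characters, block by block, turns the condition \<open>i \<in> \<pi>\<close> on the
  summation variable into the condition \<open>L \<turnstile> \<pi>\<close> on the fixed one.\<close>

lemma sum_idx_in_root_unity:
  assumes n: "n \<ge> 1" and P: "partition_on {1..p} \<pi>"
  shows "(\<Sum>i\<in>{i\<in>multi_indices n p. idx_in i \<pi>}. \<Prod>r\<in>{1..p}. root_unity n (int (i r) * int (L r)))
       = (if idx_vdash n L \<pi> then of_nat n ^ card \<pi> else 0)"
proof -
  have fin: "finite \<pi>" "\<And>\<beta>. \<beta> \<in> \<pi> \<Longrightarrow> finite \<beta>"
    using finite_elements[OF _ P] partition_onD1[OF P]
    by (simp, metis Union_upper finite_atLeastAtMost finite_subset)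
  have "(\<Sum>i\<in>{i\<in>multi_indices n p. idx_in i \<pi>}. \<Prod>r\<in>{1..p}. root_unity n (int (i r) * int (L r)))
      = (\<Prod>\<beta>\<in>\<pi>. \<Sum>c<n. \<Prod>r\<in>\<beta>. root_unity n (int c * int (L r)))"
    by (rule sum_idx_in_prod_eq_prod_blocks[OF P])
  also have "\<dots> = (\<Prod>\<beta>\<in>\<pi>. \<Sum>c<n. root_unity n (int c * (\<Sum>r\<in>\<beta>. int (L r))))"
    using fin by (intro prod.cong refl sum.cong) (simp_all add: prod_root_unity sum_distrib_left)
  also have "\<dots> = (\<Prod>\<beta>\<in>\<pi>. if int n dvd (\<Sum>r\<in>\<beta>. int (L r)) then of_nat n else 0)"
    using n by (simp add: sum_root_unity)
  also have "\<dots> = (if (\<forall>\<beta>\<in>\<pi>. int n dvd (\<Sum>r\<in>\<beta>. int (L r))) then of_nat n ^ card \<pi> else 0)"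
    by (rule prod_if_const[OF fin(1)])
  also have "(\<forall>\<beta>\<in>\<pi>. int n dvd (\<Sum>r\<in>\<beta>. int (L r))) = idx_vdash n L \<pi>"
    unfolding idx_vdash_def
    by (simp add: of_nat_sum[symmetric] int_dvd_int_iff dvd_eq_mod_eq_0[symmetric] del: of_nat_sum)
  finally show ?thesis .
qed

lemma f_pi_fourier:
  assumes n: "n \<ge> 1" and P: "partition_on {1..p} \<pi>"
  shows "f_pi n p \<pi> (fourier n x) = complex_of_real (real n ^ card \<pi> / sqrt (real n) ^ p) * g_pi n p \<pi> x"
proof -
  define A where "A = {i\<in>multi_indices n p. idx_in i \<pi>}"
  define M where "M = multi_indices n p"
  have finM: "finite M"
    unfolding M_def multi_indices_def by (simp add: finite_PiE)
  have M: "M = PiE {1..p} (\<lambda>_. {..<n})"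
    unfolding M_def multi_indices_def by (simp add: atLeast0LessThan)
  have "f_pi n p \<pi> (fourier n x) = (\<Sum>i\<in>A. (\<Prod>r\<in>{1..p}. \<Sum>l<n. root_unity n (int (i r) * int l) * x l) / sqrt_n n ^ p)"
    unfolding f_pi_def A_def fourier_root_unity by (simp add: prod_dividef)
  also have "\<dots> = (\<Sum>i\<in>A. \<Sum>L\<in>M. \<Prod>r\<in>{1..p}. root_unity n (int (i r) * int (L r)) * x (L r)) / sqrt_n n ^ p"
    unfolding M by (simp add: prod_sum_PiE sum_divide_distrib)
  also have "\<dots> = (\<Sum>L\<in>M. (\<Prod>r\<in>{1..p}. x (L r))
      * (\<Sum>i\<in>A. \<Prod>r\<in>{1..p}. root_unity n (int (i r) * int (L r)))) / sqrt_n n ^ p"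
    by (subst sum.swap) (simp add: sum_distrib_left prod.distrib mult_ac)
  also have "\<dots> = (\<Sum>L\<in>M. (\<Prod>r\<in>{1..p}. x (L r)) * (if idx_vdash n L \<pi> then of_nat n ^ card \<pi> else 0)) / sqrt_n n ^ p"
    unfolding A_def sum_idx_in_root_unity[OF n P] ..
  also have "\<dots> = of_nat n ^ card \<pi> / sqrt_n n ^ p * g_pi n p \<pi> x"
    unfolding g_pi_def M_def using finM[unfolded M_def]
    by (simp add: sum.inter_filter[symmetric] sum_distrib_left sum_divide_distrib if_distrib mult_ac cong: if_cong)
  finally show ?thesis
    by simp
qed

lemma multi_indices_bound: "i \<in> multi_indices n p \<Longrightarrow> r \<in> {1..p} \<Longrightarrow> i r < n"
  unfolding multi_indices_def by (auto simp: PiE_iff)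

lemma f_pi_cong: "(\<And>k. k < n \<Longrightarrow> x k = y k) \<Longrightarrow> f_pi n p \<pi> x = f_pi n p \<pi> y"
  unfolding f_pi_def by (intro sum.cong refl prod.cong) (auto dest: multi_indices_bound)

lemma g_pi_cong: "(\<And>k. k < n \<Longrightarrow> x k = y k) \<Longrightarrow> g_pi n p \<pi> x = g_pi n p \<pi> y"
  unfolding g_pi_def by (intro sum.cong refl prod.cong) (auto dest: multi_indices_bound)

definition reflect_index :: "nat \<Rightarrow> nat \<Rightarrow> (nat \<Rightarrow> nat) \<Rightarrow> (nat \<Rightarrow> nat)" where
  "reflect_index n p i = (\<lambda>r\<in>{1..p}. (n - i r) mod n)"

lemma reflect_index_multi_indices:
  "n \<ge> 1 \<Longrightarrow> reflect_index n p i \<in> multi_indices n p"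
  unfolding multi_indices_def reflect_index_def by (auto simp: PiE_iff)

lemma idx_in_reflect_index:
  assumes P: "partition_on {1..p} \<pi>" and i: "idx_in i \<pi>"
  shows "idx_in (reflect_index n p i) \<pi>"
  unfolding idx_in_def
proof (intro ballI)
  fix \<beta> a b assume "\<beta> \<in> \<pi>" "a \<in> \<beta>" "b \<in> \<beta>"
  then have "a \<in> {1..p}" "b \<in> {1..p}" "i a = i b"
    using i partition_onD1[OF P] unfolding idx_in_def by blast+
  then show "reflect_index n p i a = reflect_index n p i b"
    by (simp add: reflect_index_def)
qed

lemma reflect_index_reflect_index:
  assumes n: "n \<ge> 1" and i: "i \<in> multi_indices n p"
  shows "reflect_index n p (reflect_index n p i) = i"
proof
  fix r
  show "reflect_index n p (reflect_index n p i) r = i r"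
  proof (cases "r \<in> {1..p}")
    case True
    then show ?thesis
      using mod_reflect_reflect[of 0 n "i r"] multi_indices_bound[OF i True] n
      by (simp add: reflect_index_def)
  next
    case False
    then show ?thesis
      using i by (auto simp: reflect_index_def multi_indices_def PiE_def extensional_def)
  qed
qed

lemma f_pi_reflect:
  assumes n: "n \<ge> 1" and P: "partition_on {1..p} \<pi>"
  shows "f_pi n p \<pi> (\<lambda>k. x ((n - k) mod n)) = f_pi n p \<pi> x"
  unfolding f_pi_def
proof (rule sum.reindex_bij_witness[where i="reflect_index n p" and j="reflect_index n p"])
  fix i assume i: "i \<in> {i \<in> multi_indices n p. idx_in i \<pi>}"
  then show "reflect_index n p (reflect_index n p i) = i"
    using reflect_index_reflect_index[OF n] by simp
  show "reflect_index n p i \<in> {i \<in> multi_indices n p. idx_in i \<pi>}"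
    using i by (simp add: reflect_index_multi_indices[OF n] idx_in_reflect_index[OF P])
  show "(\<Prod>r\<in>{1..p}. x (reflect_index n p i r)) = (\<Prod>r\<in>{1..p}. x ((n - i r) mod n))"
    by (simp add: reflect_index_def)
qed (simp_all add: reflect_index_reflect_index[OF n] reflect_index_multi_indices[OF n]
    idx_in_reflect_index[OF P])

lemma fourier_preserves_real_f_g:
  assumes n: "n \<ge> 1" and P: "partition_on {1..p} \<pi>"
    and x: "f_pi n p \<pi> x \<in> \<real>" "g_pi n p \<pi> x \<in> \<real>"
  shows "f_pi n p \<pi> (fourier n x) \<in> \<real>" "g_pi n p \<pi> (fourier n x) \<in> \<real>"
proof -
  define c where "c = complex_of_real (real n ^ card \<pi> / sqrt (real n) ^ p)"
  have c: "c \<in> \<real>" "c \<noteq> 0"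
    unfolding c_def using n by simp_all
  show "f_pi n p \<pi> (fourier n x) \<in> \<real>"
    using f_pi_fourier[OF n P] x c by (simp add: c_def)
  have "c * g_pi n p \<pi> (fourier n x) = f_pi n p \<pi> (fourier n (fourier n x))"
    unfolding c_def by (rule f_pi_fourier[OF n P, symmetric])
  also have "\<dots> = f_pi n p \<pi> (\<lambda>k. x ((n - k) mod n))"
    by (rule f_pi_cong) (rule fourier_fourier[OF n])
  also have "\<dots> = f_pi n p \<pi> x"
    by (rule f_pi_reflect[OF n P])
  finally have "g_pi n p \<pi> (fourier n x) = f_pi n p \<pi> x / c"
    using c by (simp add: field_simps)
  then show "g_pi n p \<pi> (fourier n x) \<in> \<real>"
    using x c by simp
qed

lemma circ_matrix_in_X_set_iff:
  "circ_matrix n x \<in> X_set n p \<longleftrightarrow> circ_matrix n x \<in> circ_hadamard n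
     \<and> (\<forall>\<pi>\<in>set_partitions p. f_pi n p \<pi> x \<in> \<real> \<and> g_pi n p \<pi> x \<in> \<real>)"
proof -
  have "f_pi n p \<pi> (\<lambda>k. circ_matrix n x 0 k) = f_pi n p \<pi> x"
       "g_pi n p \<pi> (\<lambda>k. circ_matrix n x 0 k) = g_pi n p \<pi> x" for \<pi>
    by (rule f_pi_cong g_pi_cong, rule circ_matrix_first_row, assumption)+
  then show ?thesis
    unfolding X_set_def by simp
qed

lemma duality_map_X_set:
  assumes n: "n \<ge> 1" and H: "H \<in> X_set n p"
  shows "duality_map n H \<in> X_set n p"
proof -
  have "H \<in> circ_hadamard n"
    using H by (simp add: X_set_def)
  then obtain x where x: "H = circ_matrix n x"
    using circ_hadamard_iff[OF n] by blast
  have "\<forall>\<pi>\<in>set_partitions p. f_pi n p \<pi> x \<in> \<real> \<and> g_pi n p \<pi> x \<in> \<real>"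
    using H unfolding x circ_matrix_in_X_set_iff by blast
  then have "\<forall>\<pi>\<in>set_partitions p. f_pi n p \<pi> (fourier n x) \<in> \<real> \<and> g_pi n p \<pi> (fourier n x) \<in> \<real>"
    using fourier_preserves_real_f_g[OF n] by (simp add: set_partitions_def)
  moreover have "duality_map n H \<in> circ_hadamard n"
    using duality_map_circ_hadamard[OF n] \<open>H \<in> circ_hadamard n\<close> by blast
  ultimately show ?thesis
    unfolding x duality_map_circ_matrix circ_matrix_in_X_set_iff by blast
qed

theorem proposition3p4:
  fixes n p :: nat
  assumes "n \<ge> 1"
  shows "bij_betw (duality_map n) (X_set n p) (X_set n p)"
proof (rule bij_betw_byWitness[where f'="\<lambda>H. duality_map n (duality_map n (duality_map n H))"])
  have fourfold: "\<forall>H\<in>X_set n p. duality_map n (duality_map n (duality_map n (duality_map n H))) = H"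
    using duality_map_fourfold[OF assms] by (simp add: X_set_def)
  then show "\<forall>H\<in>X_set n p. duality_map n (duality_map n (duality_map n (duality_map n H))) = H" .
  from fourfold show "\<forall>H\<in>X_set n p. duality_map n (duality_map n (duality_map n (duality_map n H))) = H" .
  show "duality_map n ` X_set n p \<subseteq> X_set n p"
       "(\<lambda>H. duality_map n (duality_map n (duality_map n H))) ` X_set n p \<subseteq> X_set n p"
    using duality_map_X_set[OF assms] by auto
qed

end
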